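(* Let $a\ge b\ge1$ and $k$ be integers with $a+b+1\le k\le2a+b$. Then for every $(i,j)\in\overline{Q}_2$: - if $a+b+1\le k\le a+2b-1$, then $w_6\in\mathcal{R}^k_{(a,b),(i,j)}$; - if $a\ne b$ and $a+2b\le k\le2a+b$, then $w_1\in\mathcal{R}^k_{(a,b),(i,j)}$; - if $a\ne b$ and $k=a+2b$, then $w_4\in\mathcal{R}^k_{(a,b),(i,j)}$.
   Context: $\widehat{\mathfrak{su}}(3)_k$ fusion. Let $P_+^k=\{(\lambda_1,\lambda_2)\in\mathbb{Z}_{\ge0}^2:\lambda_1+\lambda_2\le k\}$. For $\lambda,\mu,\nu\in P_+^k$ set - $\mathcal{A}=\tfrac13[2(\lambda_1+\mu_1+\nu_2)+\lambda_2+\mu_2+\nu_1]$, - $\mathcal{B}=\tfrac13[\lambda_1+\mu_1+\nu_2+2(\lambda_2+\mu_2+\nu_1)]$, - $k_0^{\max}=\min(\mathcal{A},\mathcal{B})$, - $k_0^{\min}=\max(\lambda_1+\lambda_2,\mu_1+\mu_2,\nu_1+\nu_2,\mathcal{A}-\lambda_1,\mathcal{A}-\mu_1,\mathcal{A}-\nu_2,\mathcal{B}-\lambda_2,\mathcal{B}-\mu_2,\mathcal{B}-\nu_1)$. The fusion multiplicity is $N^{(k)\nu}_{\lambda,\mu}=\min(k_0^{\max},k)-k_0^{\min}+1$ if $\mathcal{A},\mathcal{B}$ are nonnegative integers, $k_0^{\max}\ge k_0^{\min}$ and $k\ge k_0^{\min}$; otherwise it is $0$. The set $\mathcal{R}^k_{\lambda,\mu}$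 is $\{\nu\in P_+^k:N^{(k)\nu}_{\lambda,\mu}\ne0\}$. The candidate weights are $w_1=(a-1,b+2)$, $w_2=(a+2,b-1)$, $w_3=(a+1,b-2)$, $w_4=(a-2,b+1)$, $w_5=(a+1,b+1)$, $w_6=(a-1,b-1)$. The set $\overline{Q}_2$ is defined by $\overline{Q}_2=\{(k-a+l,k-a-2l):l\in\mathbb{Z},\ \max(1,k-2a)\le l\le\min(k-a-b,\lfloor(k-a)/2\rfloor,b)\}$. *)

theory Defs
  imports Complex_Main
begin

type_synonym wt = "int \<times> int"

definition Pplus :: "int \<Rightarrow> wt set" where
  "Pplus k = {(l1, l2). 0 \<le> l1 \<and> 0 \<le> l2 \<and> l1 + l2 \<le> k}"

definition calA :: "wt \<Rightarrow> wt \<Rightarrow> wt \<Rightarrow> rat" where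
  "calA l m n = (2 * of_int (fst l + fst m + snd n) + of_int (snd l + snd m + fst n)) / 3"

definition calB :: "wt \<Rightarrow> wt \<Rightarrow> wt \<Rightarrow> rat" where
  "calB l m n = (of_int (fst l + fst m + snd n) + 2 * of_int (snd l + snd m + fst n)) / 3"

definition k0max :: "wt \<Rightarrow> wt \<Rightarrow> wt \<Rightarrow> rat" where
  "k0max l m n = min (calA l m n) (calB l m n)"

definition k0min :: "wt \<Rightarrow> wt \<Rightarrow> wt \<Rightarrow> rat" where
  "k0min l m n = Max {of_int (fst l + snd l), of_int (fst m + snd m), of_int (fst n + snd n),
      calA l m n - of_int (fst l), calA l m n - of_int (fst m), calA l m n - of_int (snd n),
      calB l m n - of_int (snd l), calB l m n - of_int (snd m), calB l m n - of_int (fst n)}"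

definition fusion_mult :: "int \<Rightarrow> wt \<Rightarrow> wt \<Rightarrow> wt \<Rightarrow> rat" where
  "fusion_mult k l m n =
     (if calA l m n \<in> \<int> \<and> calA l m n \<ge> 0 \<and> calB l m n \<in> \<int> \<and> calB l m n \<ge> 0
         \<and> k0max l m n \<ge> k0min l m n \<and> of_int k \<ge> k0min l m n
      then min (k0max l m n) (of_int k) - k0min l m n + 1 else 0)"

definition fusion_set :: "int \<Rightarrow> wt \<Rightarrow> wt \<Rightarrow> wt set" where
  "fusion_set k l m = {n \<in> Pplus k. fusion_mult k l m n \<noteq> 0}"

definition Qbar2 :: "int \<Rightarrow> int \<Rightarrow> int \<Rightarrow> wt set" where
  "Qbar2 a b k = {(k - a + l, k - a - 2 * l) | l.
      max 1 (k - 2 * a) \<le> l \<and> l \<le> min (min (k - a - b) ((k - a) div 2)) b}"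

end

theory Submission
  imports Defs
begin

text \<open>When \<open>\<A>\<close> and \<open>\<B>\<close> are integers, the fusion multiplicity is
  \<open>min(\<A>, \<B>, k) - k\<^sub>0\<^sup>min + 1\<close>, so a weight lies in the fusion set as soon as each of the nine
  quantities entering \<open>k\<^sub>0\<^sup>min\<close> is bounded by \<open>min(\<A>, \<B>, k)\<close>. For the weights of
  \<open>Q\<^sub>2\<close> and each candidate \<open>w\<close>, \<open>\<A>\<close> and \<open>\<B>\<close> are explicit integers and these nine
  bounds are linear inequalities in \<open>a, b, k, l\<close>.\<close>

lemma calA_eq_of_int:
  assumes "2 * (fst l + fst m + snd n) + (snd l + snd m + fst n) = 3 * A"
  shows "calA l m n = of_int A"
proof -
  have "calA l m n = of_int (2 * (fst l + fst m + snd n) + (snd l + snd m + fst n)) / 3"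
    unfolding calA_def by simp
  also have "\<dots> = of_int A" unfolding assms by simp
  finally show ?thesis .
qed

lemma calB_eq_of_int:
  assumes "(fst l + fst m + snd n) + 2 * (snd l + snd m + fst n) = 3 * B"
  shows "calB l m n = of_int B"
proof -
  have "calB l m n = of_int ((fst l + fst m + snd n) + 2 * (snd l + snd m + fst n)) / 3"
    unfolding calB_def by simp
  also have "\<dots> = of_int B" unfolding assms by simp
  finally show ?thesis .
qed

lemma mem_fusion_setI:
  fixes k A B :: int and l m n :: wt
  assumes A: "2 * (fst l + fst m + snd n) + (snd l + snd m + fst n) = 3 * A"
    and B: "(fst l + fst m + snd n) + 2 * (snd l + snd m + fst n) = 3 * B"
    and n: "n \<in> Pplus k" and nonneg: "0 \<le> A" "0 \<le> B"
    and bounds: "\<forall>x \<in> {fst l + snd l, fst m + snd m, fst n + snd n,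
        A - fst l, A - fst m, A - snd n, B - snd l, B - snd m, B - fst n}. x \<le> min A (min B k)"
  shows "n \<in> fusion_set k l m"
proof -
  have hA: "calA l m n = of_int A" using A by (rule calA_eq_of_int)
  have hB: "calB l m n = of_int B" using B by (rule calB_eq_of_int)
  have top: "min (k0max l m n) (of_int k) = of_int (min A (min B k))"
    unfolding k0max_def hA hB by (simp add: min.assoc)
  have le: "k0min l m n \<le> min (k0max l m n) (of_int k)"
    unfolding top k0min_def hA hB using bounds
    by (subst Max_le_iff) (simp_all only: finite.intros insert_not_empty ball_simps
        of_int_diff[symmetric] of_int_le_iff simp_thms)
  then have "fusion_mult k l m n = min (k0max l m n) (of_int k) - k0min l m n + 1"
    unfolding fusion_mult_def using nonneg hA hB by auto
  with le have "fusion_mult k l m n \<ge> 1" by simp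
  with n show ?thesis unfolding fusion_set_def by auto
qed

lemma Qbar2E:
  assumes "(i, j) \<in> Qbar2 a b k"
  obtains l where "i = k - a + l" "j = k - a - 2 * l" "1 \<le> l" "k - 2 * a \<le> l"
    "l \<le> k - a - b" "2 * l \<le> k - a" "l \<le> b"
proof -
  from assms obtain l where "i = k - a + l" "j = k - a - 2 * l" "max 1 (k - 2 * a) \<le> l"
    "l \<le> min (min (k - a - b) ((k - a) div 2)) b"
    unfolding Qbar2_def by auto
  then show ?thesis by (intro that[of l]) linarith+
qed

lemma w6_mem_fusion_set:
  assumes "b \<le> a" "k \<le> a + 2 * b - 1"
    and "1 \<le> l" "k - 2 * a \<le> l" "l \<le> k - a - b" "2 * l \<le> k - a"
  shows "(a - 1, b - 1) \<in> fusion_set k (a, b) (k - a + l, k - a - 2 * l)"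
  by (rule mem_fusion_setI[where A = "k + b - 1" and B = "k + b - l - 1"])
    (use assms in \<open>simp_all add: Pplus_def\<close>)

lemma w1_mem_fusion_set:
  assumes "b < a" "a + 2 * b \<le> k"
    and "1 \<le> l" "k - 2 * a \<le> l" "l \<le> k - a - b" "2 * l \<le> k - a" "l \<le> b"
  shows "(a - 1, b + 2) \<in> fusion_set k (a, b) (k - a + l, k - a - 2 * l)"
  by (rule mem_fusion_setI[where A = "k + b + 1" and B = "k + b - l"])
    (use assms in \<open>simp_all add: Pplus_def\<close>)

lemma w4_mem_fusion_set:
  assumes "b < a" "k = a + 2 * b"
    and "1 \<le> l" "k - 2 * a \<le> l" "l \<le> k - a - b" "2 * l \<le> k - a"
  shows "(a - 2, b + 1) \<in> fusion_set k (a, b) (k - a + l, k - a - 2 * l)"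
  by (rule mem_fusion_setI[where A = "k + b" and B = "k + b - l - 1"])
    (use assms in \<open>simp_all add: Pplus_def\<close>)

theorem mainTheorem10:
  fixes a b k :: int
  assumes "b \<ge> 1" and "a \<ge> b" and "a + b + 1 \<le> k" and "k \<le> 2 * a + b"
  shows "\<forall>(i, j) \<in> Qbar2 a b k.
      (a + b + 1 \<le> k \<and> k \<le> a + 2 * b - 1 \<longrightarrow> (a - 1, b - 1) \<in> fusion_set k (a, b) (i, j))
    \<and> (a \<noteq> b \<and> a + 2 * b \<le> k \<and> k \<le> 2 * a + b \<longrightarrow> (a - 1, b + 2) \<in> fusion_set k (a, b) (i, j))
    \<and> (a \<noteq> b \<and> k = a + 2 * b \<longrightarrow> (a - 2, b + 1) \<in> fusion_set k (a, b) (i, j))"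
proof clarify
  fix i j assume "(i, j) \<in> Qbar2 a b k"
  then obtain l where ij: "i = k - a + l" "j = k - a - 2 * l"
    and l: "1 \<le> l" "k - 2 * a \<le> l" "l \<le> k - a - b" "2 * l \<le> k - a" "l \<le> b"
    by (rule Qbar2E)
  show "(a + b + 1 \<le> k \<and> k \<le> a + 2 * b - 1 \<longrightarrow> (a - 1, b - 1) \<in> fusion_set k (a, b) (i, j))
    \<and> (a \<noteq> b \<and> a + 2 * b \<le> k \<and> k \<le> 2 * a + b \<longrightarrow> (a - 1, b + 2) \<in> fusion_set k (a, b) (i, j))
    \<and> (a \<noteq> b \<and> k = a + 2 * b \<longrightarrow> (a - 2, b + 1) \<in> fusion_set k (a, b) (i, j))"
    unfolding ij using assms l
    by (intro conjI impI; elim conjE)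
      (rule w6_mem_fusion_set w1_mem_fusion_set w4_mem_fusion_set; simp)+
qed

end
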